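(* Let $(\alpha_j)_{j\in\mathbb N}$, $(\beta_j)_{j\in\mathbb N}$, $(\sigma_j)_{j\in\mathbb N}$ be real sequences with $$\alpha_j\ge 0,\qquad 1\ge\beta_1\ge\beta_2\ge\cdots>0,\qquad 1<\sigma_1\le\sigma_2\le\cdots,$$ and suppose there is a constant $c>0$ with $0\le\alpha_j\le c\beta_j$ for all $j\in\mathbb N$. Let $\mathcal B=\{\mathcal B_d\}_{d\in\mathbb N}$ be the associated sequence of additive random fields with Korobov-kernel marginals (see context). Then $\mathcal B$ is strongly polynomially tractable for the normalized error criterion (NOR) if and only if $$A_*:=\liminf_{d\to\infty}\frac{\ln(1/\beta_d)}{\ln d}>1,$$ and in that case the exponent of strong polynomial tractability (for NOR) is $$p^{\rm str-avg}=\max\Big\{\frac{2}{A_*-1},\frac{2}{\sigma_1-1}\Big\}.$$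
   Context: For $\alpha\ge0$, $\beta>0$, $\sigma>1$, let $B_{\alpha,\beta,\sigma}(x)$, $x\in[0,1]$, be a zero-mean random process with covariance function $\kappa_{\alpha,\beta,\sigma}(x,y)=\alpha+2\beta\sum_{k=1}^\infty k^{-\sigma}\cos(2\pi k(x-y))$. Let $B_j$, $j\in\mathbb N$, be independent zero-mean random processes on $[0,1]$ with covariance functions $\kappa_{\alpha_j,\beta_j,\sigma_j}$, and for $d\in\mathbb N$ let $\mathcal B_d(\mathbf x)=\sum_{j=1}^d B_j(x_j)$, $\mathbf x\in[0,1]^d$, a zero-mean random field with covariance $\kappa^{\mathcal B_d}(\mathbf x,\mathbf y)=\sum_{j=1}^d\kappa_{\alpha_j,\beta_j,\sigma_j}(x_j,y_j)$, viewed as a random element of $L_2([0,1]^d)$. The $n$th minimal average case error is $e^{\mathcal B_d}(n)=\inf\{(\mathbb E\|\mathcal B_d-\sum_{m=1}^n(\mathcal B_d,\varphi_m)_{2,d}\psi_m\|_{2,d}^2)^{1/2}:\varphi_m,\psi_m\in L_2([0,1]^d)\}$ and $e^{\mathcal B_d}(0)=(\mathbb E\|\mathcal B_d\|_{2,d}^2)^{1/2}$. (Equivalently, if $\lambda_{d,1}\ge\lambda_{d,2}\ge\cdots$ are the eigenvalues of the covariance operator of $\mathcal B_d$ on $L_2([0,1]^d)$, namely $\sum_{j=1}^d\alpha_j$ together with the numbers $\beta_j k^{-\sigma_j}$, $k\in\mathbb N$, $j=1,\dots,d$, each taken twice, then $e^{\mathcal B_d}(n)^2=\sum_{j>n}\lambda_{d,j}$.)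 For $\varepsilon\in(0,1)$, the NOR information complexity is $n^{\mathcal B_d,\mathrm{NOR}}(\varepsilon)=\min\{n\in\mathbb N: e^{\mathcal B_d}(n)\le\varepsilon\, e^{\mathcal B_d}(0)\}$. The problem is strongly polynomially tractable (SPT) for NOR if there are $C,p\ge0$ with $n^{\mathcal B_d,\mathrm{NOR}}(\varepsilon)\le C\varepsilon^{-p}$ for all $d\in\mathbb N$, $\varepsilon\in(0,1)$; the exponent $p^{\rm str-avg}$ is the infimum of such $p$. Convention: $2/(A_*-1)=0$ if $A_*=\infty$. *)

theory Defs
  imports "HOL-Analysis.Analysis" "HOL-Library.Extended_Real"
begin

text \<open>Eigenvalues of the covariance operator of B_d, indexed by
  None (the eigenvalue sum of alpha_j, j=1..d) and Some (j,k,b)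
  (the eigenvalue beta_j k^(-sigma_j), 1<=j<=d, k>=1, each twice via b::bool).
  Indices outside the ranges carry eigenvalue 0 (harmless).\<close>
definition eig :: "(nat \<Rightarrow> real) \<Rightarrow> (nat \<Rightarrow> real) \<Rightarrow> (nat \<Rightarrow> real) \<Rightarrow> nat
    \<Rightarrow> (nat \<times> nat \<times> bool) option \<Rightarrow> real" where
  "eig \<alpha> \<beta> \<sigma> d i = (case i of
      None \<Rightarrow> (\<Sum>j=1..d. \<alpha> j)
    | Some (j, k, b) \<Rightarrow> (if 1 \<le> j \<and> j \<le> d \<and> 1 \<le> k then \<beta> j * real k powr (- \<sigma> j) else 0))"

text \<open>Squared n-th minimal average case error: sum of all eigenvalues except
  the n largest, i.e. the infimum over index sets S of at most n eigenvalues
  of the sum of the remaining ones.\<close>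
definition err2 :: "(nat \<Rightarrow> real) \<Rightarrow> (nat \<Rightarrow> real) \<Rightarrow> (nat \<Rightarrow> real) \<Rightarrow> nat \<Rightarrow> nat \<Rightarrow> real" where
  "err2 \<alpha> \<beta> \<sigma> d n = (INF S \<in> {S. finite S \<and> card S \<le> n}. infsum (eig \<alpha> \<beta> \<sigma> d) (UNIV - S))"

definition err :: "(nat \<Rightarrow> real) \<Rightarrow> (nat \<Rightarrow> real) \<Rightarrow> (nat \<Rightarrow> real) \<Rightarrow> nat \<Rightarrow> nat \<Rightarrow> real" where
  "err \<alpha> \<beta> \<sigma> d n = sqrt (err2 \<alpha> \<beta> \<sigma> d n)"

definition n_nor :: "(nat \<Rightarrow> real) \<Rightarrow> (nat \<Rightarrow> real) \<Rightarrow> (nat \<Rightarrow> real) \<Rightarrow> nat \<Rightarrow> real \<Rightarrow> nat" where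
  "n_nor \<alpha> \<beta> \<sigma> d \<epsilon> = (LEAST n. err \<alpha> \<beta> \<sigma> d n \<le> \<epsilon> * err \<alpha> \<beta> \<sigma> d 0)"

definition spt_bound :: "(nat \<Rightarrow> real) \<Rightarrow> (nat \<Rightarrow> real) \<Rightarrow> (nat \<Rightarrow> real) \<Rightarrow> real \<Rightarrow> bool" where
  "spt_bound \<alpha> \<beta> \<sigma> p \<longleftrightarrow> p \<ge> 0 \<and> (\<exists>C\<ge>0. \<forall>d\<ge>1. \<forall>\<epsilon>. 0 < \<epsilon> \<and> \<epsilon> < 1 \<longrightarrow>
      real (n_nor \<alpha> \<beta> \<sigma> d \<epsilon>) \<le> C * \<epsilon> powr (- p))"

definition SPT_NOR :: "(nat \<Rightarrow> real) \<Rightarrow> (nat \<Rightarrow> real) \<Rightarrow> (nat \<Rightarrow> real) \<Rightarrow> bool" where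
  "SPT_NOR \<alpha> \<beta> \<sigma> \<longleftrightarrow> (\<exists>p. spt_bound \<alpha> \<beta> \<sigma> p)"

definition p_str_avg :: "(nat \<Rightarrow> real) \<Rightarrow> (nat \<Rightarrow> real) \<Rightarrow> (nat \<Rightarrow> real) \<Rightarrow> real" where
  "p_str_avg \<alpha> \<beta> \<sigma> = Inf {p. spt_bound \<alpha> \<beta> \<sigma> p}"

definition A_star :: "(nat \<Rightarrow> real) \<Rightarrow> ereal" where
  "A_star \<beta> = liminf (\<lambda>d. ereal (ln (1 / \<beta> d) / ln (real d)))"

end

theory Submission
  imports Defs
begin

(* Necessity: already for d = 1 the eigenvalues \<beta> 1 k^(-\<sigma> 1) force n_nor \<ge> const \<epsilon>^(-2/(\<sigma> 1 - 1)).
   A fixed \<epsilon> shows that \<Sum>j \<beta> j is bounded, hence so is the initial error; then for d = m and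
   \<epsilon> chosen with n_nor \<le> m/2, at least m/2 of the eigenvalues \<beta> 1 \<ge> ... \<ge> \<beta> m survive, so
   \<beta> m = O(m^(-1-2/p)) and A_star \<beta> \<ge> 1 + 2/p.
   Sufficiency: for \<tau> = p/(p+2), the conditions \<sigma> 1 \<tau> > 1 and A_star \<beta> > 1/\<tau> bound the
   \<tau>-th power sums of the eigenvalues uniformly in d by some M. Keeping the eigenvalues above a
   threshold t then uses at most M t^(-\<tau>) of them and leaves a tail of at most t^(1-\<tau>) M, while the
   initial error is at least \<beta> 1. *)

(* The k = 0 term vanishes because 0 powr _ = 0. *)
definition zeta_real :: "real \<Rightarrow> real" where
  "zeta_real s = (\<Sum>k. real k powr - s)"

lemma summable_powr_neg: "s > 1 \<Longrightarrow> summable (\<lambda>k. real k powr - s)"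
  by (subst summable_real_powr_iff) auto

lemma sum_le_zeta_real: "s > 1 \<Longrightarrow> finite K \<Longrightarrow> (\<Sum>k\<in>K. real k powr - s) \<le> zeta_real s"
  unfolding zeta_real_def by (rule sum_le_suminf[OF summable_powr_neg]) auto

lemma zeta_real_ge_1: "s > 1 \<Longrightarrow> zeta_real s \<ge> 1"
  using sum_le_zeta_real[of s "{1}"] by simp

lemma le_if_powr_le_const_mult_powr:
  fixes a b B :: real
  assumes "\<And>\<epsilon>. 0 < \<epsilon> \<Longrightarrow> \<epsilon> < 1 \<Longrightarrow> \<epsilon> powr a \<le> B * \<epsilon> powr b"
  shows "b \<le> a"
proof (rule ccontr)
  assume "\<not> b \<le> a"
  define x where "x = 1 / (\<bar>B\<bar> + 2)"
  define \<epsilon> where "\<epsilon> = x powr (1 / (b - a))"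
  have x: "0 < x" "x < 1"
    unfolding x_def by auto
  have \<epsilon>: "0 < \<epsilon>" "\<epsilon> < 1"
    unfolding \<epsilon>_def using x \<open>\<not> b \<le> a\<close> powr_less_mono2[of "1 / (b - a)" x 1] by auto
  have "(1 / (b - a)) * (a - b) = -1"
    using \<open>\<not> b \<le> a\<close> by (simp add: field_simps)
  then have "\<epsilon> powr (a - b) = x powr -1"
    unfolding \<epsilon>_def by (simp add: powr_powr)
  also have "\<dots> = \<bar>B\<bar> + 2"
    unfolding x_def by (simp add: powr_minus_divide)
  finally have "\<epsilon> powr a = (\<bar>B\<bar> + 2) * \<epsilon> powr b"
    using powr_add[of \<epsilon> "a - b" b] by simp
  moreover have "B * \<epsilon> powr b < (\<bar>B\<bar> + 2) * \<epsilon> powr b"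
    using \<epsilon> by (intro mult_strict_right_mono) auto
  ultimately show False
    using assms[OF \<epsilon>] by simp
qed

lemma infsum_Diff_ge_card_mult:
  fixes f :: "'a \<Rightarrow> real"
  assumes "f summable_on UNIV" "\<And>x. 0 \<le> f x" "finite S" "finite G"
    and "\<And>x. x \<in> G \<Longrightarrow> m \<le> f x" "0 \<le> m"
  shows "(real (card G) - real (card S)) * m \<le> infsum f (UNIV - S)"
proof -
  have "real (card G) - real (card S) \<le> real (card (G - S))"
    using diff_card_le_card_Diff[OF \<open>finite S\<close>, of G] by linarith
  then have "(real (card G) - real (card S)) * m \<le> (\<Sum>x\<in>G - S. m)"
    using \<open>0 \<le> m\<close> by (simp add: mult_right_mono)
  also have "\<dots> \<le> sum f (G - S)"
    using assms(5) by (intro sum_mono) auto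
  also have "\<dots> \<le> infsum f (UNIV - S)"
    using assms by (intro finite_sum_le_infsum summable_on_subset[OF assms(1)]) auto
  finally show ?thesis .
qed

lemma infsum_Diff_ge_sum_minus_card:
  fixes f :: "'a \<Rightarrow> real"
  assumes "f summable_on UNIV" "\<And>x. 0 \<le> f x" "finite S" "finite G"
    and "\<And>x. x \<in> G \<Longrightarrow> f x \<le> 1"
  shows "sum f G - real (card S) \<le> infsum f (UNIV - S)"
proof -
  have "sum f (G \<inter> S) \<le> real (card (G \<inter> S))"
    using sum_bounded_above[of "G \<inter> S" f 1] assms(5) by simp
  also have "\<dots> \<le> real (card S)"
    using \<open>finite S\<close> by (simp add: card_mono)
  finally have "sum f G - real (card S) \<le> sum f (G - S)"
    using \<open>finite G\<close> sum.Int_Diff[of G f S] by simp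
  also have "\<dots> \<le> infsum f (UNIV - S)"
    using assms by (intro finite_sum_le_infsum summable_on_subset[OF assms(1)]) auto
  finally show ?thesis .
qed

lemma
  fixes f :: "'a \<Rightarrow> real"
  assumes "0 < \<tau>" "0 < t" and M: "\<And>F. finite F \<Longrightarrow> (\<Sum>x\<in>F. f x powr \<tau>) \<le> M"
  shows finite_superlevel_set: "finite {x. t < f x}"
    and card_superlevel_set_le: "real (card {x. t < f x}) \<le> M / t powr \<tau>"
proof -
  have card_le: "real (card F) \<le> M / t powr \<tau>" if "finite F" "F \<subseteq> {x. t < f x}" for F
  proof -
    have "real (card F) * t powr \<tau> = (\<Sum>x\<in>F. t powr \<tau>)"
      by simp
    also have "\<dots> \<le> (\<Sum>x\<in>F. f x powr \<tau>)"
      using that assms by (intro sum_mono powr_mono2) auto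
    also have "\<dots> \<le> M"
      using M[OF \<open>finite F\<close>] .
    finally show ?thesis
      using \<open>0 < t\<close> by (simp add: pos_le_divide_eq)
  qed
  show fin: "finite {x. t < f x}"
  proof (rule ccontr)
    assume "infinite {x. t < f x}"
    then obtain F where F: "finite F" "card F = nat \<lceil>M / t powr \<tau>\<rceil> + 1" "F \<subseteq> {x. t < f x}"
      using infinite_arbitrarily_large by blast
    have "M / t powr \<tau> < real (card F)"
      using F(2) by linarith
    with card_le[OF F(1,3)] show False
      by simp
  qed
  show "real (card {x. t < f x}) \<le> M / t powr \<tau>"
    using card_le[OF fin] by simp
qed

lemma infsum_le_powr_mult_if_le:
  fixes f :: "'a \<Rightarrow> real"
  assumes "f summable_on A" "\<And>x. x \<in> A \<Longrightarrow> 0 \<le> f x" "\<And>x. x \<in> A \<Longrightarrow> f x \<le> t"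
    and "0 \<le> \<tau>" "\<tau> \<le> 1" and M: "\<And>F. finite F \<Longrightarrow> F \<subseteq> A \<Longrightarrow> (\<Sum>x\<in>F. f x powr \<tau>) \<le> M"
  shows "infsum f A \<le> t powr (1 - \<tau>) * M"
proof (rule infsum_le_finite_sums[OF assms(1)])
  fix F assume F: "finite F" "F \<subseteq> A"
  have "f x \<le> t powr (1 - \<tau>) * f x powr \<tau>" if "x \<in> A" for x
  proof (cases "f x = 0")
    case False
    then have "f x = f x powr (1 - \<tau>) * f x powr \<tau>"
      using assms(2)[OF that] by (simp flip: powr_add)
    also have "\<dots> \<le> t powr (1 - \<tau>) * f x powr \<tau>"
      using that assms by (intro mult_right_mono powr_mono2) auto
    finally show ?thesis .
  qed simp
  then have "sum f F \<le> (\<Sum>x\<in>F. t powr (1 - \<tau>) * f x powr \<tau>)"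
    using F by (intro sum_mono) auto
  also have "\<dots> \<le> t powr (1 - \<tau>) * M"
    using M[OF F] by (simp flip: sum_distrib_left add: mult_left_mono)
  finally show "sum f F \<le> t powr (1 - \<tau>) * M" .
qed

lemma A_star_ge_if_eventually_le:
  fixes \<beta> :: "nat \<Rightarrow> real"
  assumes "D > 0" and le: "eventually (\<lambda>m. 0 < \<beta> m \<and> \<beta> m \<le> D * real m powr - a) sequentially"
  shows "ereal a \<le> A_star \<beta>"
proof -
  have "eventually (\<lambda>m. ereal (a - ln D / ln (real m)) \<le> ereal (ln (1 / \<beta> m) / ln (real m)))
      sequentially"
    using le eventually_gt_at_top[of 1]
  proof eventually_elim
    case (elim m)
    then have "ln (\<beta> m) \<le> ln (D * real m powr - a)"
      by simp
    also have "\<dots> = ln D - a * ln (real m)"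
      using \<open>D > 0\<close> elim by (simp add: ln_mult ln_powr)
    finally have "a * ln (real m) - ln D \<le> ln (1 / \<beta> m)"
      using elim by (simp add: ln_div)
    moreover have "ln (real m) > 0"
      using elim by simp
    ultimately have "(a * ln (real m) - ln D) / ln (real m) \<le> ln (1 / \<beta> m) / ln (real m)"
      by (simp add: divide_right_mono)
    also have "(a * ln (real m) - ln D) / ln (real m) = a - ln D / ln (real m)"
      using \<open>ln (real m) > 0\<close> by (simp add: field_simps)
    finally show ?case
      by simp
  qed
  then have "liminf (\<lambda>m. ereal (a - ln D / ln (real m))) \<le> A_star \<beta>"
    unfolding A_star_def by (rule Liminf_mono)
  moreover have "((\<lambda>m. a - ln D / ln (real m)) \<longlongrightarrow> a - 0) sequentially"
    by (intro tendsto_intros tendsto_divide_0[OF tendsto_const] filterlim_at_top_imp_at_infinity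
        filterlim_compose[OF ln_at_top filterlim_real_sequentially])
  then have "liminf (\<lambda>m. ereal (a - ln D / ln (real m))) = ereal a"
    by (intro lim_imp_Liminf tendsto_ereal) simp_all
  ultimately show ?thesis
    by simp
qed

lemma summable_powr_if_A_star_gt:
  fixes \<beta> :: "nat \<Rightarrow> real"
  assumes "0 < \<tau>" "ereal (1 / \<tau>) < A_star \<beta>" "\<And>j. j \<ge> 1 \<Longrightarrow> \<beta> j > 0"
  shows "summable (\<lambda>j. \<beta> j powr \<tau>)"
proof -
  obtain b where b: "1 / \<tau> < b" "ereal b < A_star \<beta>"
    using ereal_dense2[OF assms(2)] by auto
  have "eventually (\<lambda>j. ereal b < ereal (ln (1 / \<beta> j) / ln (real j))) sequentially"
    using less_LiminfD[OF b(2)[unfolded A_star_def]] .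
  then have bound: "eventually (\<lambda>j. norm (\<beta> j powr \<tau>) \<le> real j powr - (b * \<tau>)) sequentially"
    using eventually_gt_at_top[of 1]
  proof eventually_elim
    case (elim j)
    then have "\<beta> j > 0" "ln (real j) > 0"
      using assms(3) by auto
    have "b < ln (1 / \<beta> j) / ln (real j)"
      using elim(1) by simp
    then have "b * ln (real j) < ln (1 / \<beta> j)"
      using \<open>ln (real j) > 0\<close> by (simp only: pos_less_divide_eq)
    also have "\<dots> = - ln (\<beta> j)"
      using \<open>\<beta> j > 0\<close> by (simp add: ln_div)
    finally have "ln (\<beta> j) < ln (real j powr - b)"
      using elim by (simp add: ln_powr)
    then have "\<beta> j < real j powr - b"
      using \<open>\<beta> j > 0\<close> elim ln_less_cancel_iff[of "\<beta> j" "real j powr - b"] by simp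
    then have "\<beta> j powr \<tau> \<le> (real j powr - b) powr \<tau>"
      using \<open>\<beta> j > 0\<close> \<open>0 < \<tau>\<close> by (intro powr_mono2) auto
    then show ?case
      by (simp add: powr_powr)
  qed
  have "b * \<tau> > 1"
    using b(1) \<open>0 < \<tau>\<close> by (simp add: field_simps)
  then have "summable (\<lambda>j. real j powr - (b * \<tau>))"
    by (simp add: summable_real_powr_iff)
  then show ?thesis
    by (rule summable_comparison_test_ev[OF bound])
qed

definition spt_exponent :: "ereal \<Rightarrow> real \<Rightarrow> real" where
  "spt_exponent A s = max (if A = \<infinity> then 0 else 2 / (real_of_ereal A - 1)) (2 / (s - 1))"

lemma spt_exponent_le:
  assumes "p > 0" "ereal (1 + 2 / p) \<le> A" "2 / (s - 1) \<le> p"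
  shows "spt_exponent A s \<le> p"
proof (cases A)
  case (real r)
  have "0 < 2 / p"
    using assms(1) by simp
  moreover have "1 + 2 / p \<le> r"
    using assms(2) real by simp
  ultimately have "2 / p \<le> r - 1" "r > 1"
    by linarith+
  then have "2 / (r - 1) \<le> p"
    using assms(1) by (simp add: field_simps)
  then show ?thesis
    using real assms(3) by (simp add: spt_exponent_def)
qed (use assms in \<open>auto simp: spt_exponent_def\<close>)

lemma less_spt_exponentD:
  assumes "1 < A" "1 < s" "spt_exponent A s < p"
  shows "0 < p" "2 / (s - 1) < p" "ereal (1 + 2 / p) < A"
proof -
  show "2 / (s - 1) < p"
    using assms(3) by (simp add: spt_exponent_def)
  moreover have "0 < 2 / (s - 1)"
    using assms(2) by simp
  ultimately show "0 < p"
    by linarith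
  show "ereal (1 + 2 / p) < A"
  proof (cases A)
    case (real r)
    then have "2 / (r - 1) < p" "r > 1"
      using assms(1,3) by (auto simp: spt_exponent_def)
    then have "2 / p < r - 1"
      using \<open>0 < p\<close> by (simp add: field_simps)
    then show ?thesis
      using real by simp
  qed (use assms(1) in auto)
qed

lemma cInf_eq_if_threshold:
  fixes X :: "real set"
  assumes "\<And>p. p \<in> X \<Longrightarrow> q \<le> p" "\<And>p. q < p \<Longrightarrow> p \<in> X"
  shows "Inf X = q"
proof (rule antisym)
  show "Inf X \<le> q"
  proof (rule field_le_epsilon)
    fix \<delta> :: real assume "\<delta> > 0"
    then show "Inf X \<le> q + \<delta>"
      using assms by (intro cInf_lower bdd_belowI) auto
  qed
  show "q \<le> Inf X"
    using assms(1) assms(2)[of "q + 1"] by (intro cInf_greatest) auto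
qed

lemma spt_boundE:
  assumes "spt_bound \<alpha> \<beta> \<sigma> p"
  obtains C where "C \<ge> 1"
    and "\<And>d \<epsilon>. d \<ge> 1 \<Longrightarrow> 0 < \<epsilon> \<Longrightarrow> \<epsilon> < 1 \<Longrightarrow> real (n_nor \<alpha> \<beta> \<sigma> d \<epsilon>) \<le> C * \<epsilon> powr - p"
proof -
  obtain C where C: "\<And>d \<epsilon>. d \<ge> 1 \<Longrightarrow> 0 < \<epsilon> \<Longrightarrow> \<epsilon> < 1 \<Longrightarrow> real (n_nor \<alpha> \<beta> \<sigma> d \<epsilon>) \<le> C * \<epsilon> powr - p"
    using assms unfolding spt_bound_def by blast
  show ?thesis
  proof (rule that[of "max C 1"])
    fix d :: nat and \<epsilon> :: real assume "d \<ge> 1" "0 < \<epsilon>" "\<epsilon> < 1"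
    moreover have "C * \<epsilon> powr - p \<le> max C 1 * \<epsilon> powr - p"
      by (intro mult_right_mono) auto
    ultimately show "real (n_nor \<alpha> \<beta> \<sigma> d \<epsilon>) \<le> max C 1 * \<epsilon> powr - p"
      using C[of d \<epsilon>] by linarith
  qed simp
qed

locale additive_korobov =
  fixes \<alpha> \<beta> \<sigma> :: "nat \<Rightarrow> real" and c :: real
  assumes alpha_nonneg: "\<And>j. j \<ge> 1 \<Longrightarrow> \<alpha> j \<ge> 0"
    and beta_1_le_1: "\<beta> 1 \<le> 1"
    and beta_Suc_le: "\<And>j. j \<ge> 1 \<Longrightarrow> \<beta> (Suc j) \<le> \<beta> j"
    and beta_pos: "\<And>j. j \<ge> 1 \<Longrightarrow> \<beta> j > 0"
    and sigma_1_gt_1: "\<sigma> 1 > 1"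
    and sigma_le_Suc: "\<And>j. j \<ge> 1 \<Longrightarrow> \<sigma> j \<le> \<sigma> (Suc j)"
    and c_pos: "c > 0"
    and alpha_le: "\<And>j. j \<ge> 1 \<Longrightarrow> \<alpha> j \<le> c * \<beta> j"
begin

abbreviation E :: "nat \<Rightarrow> (nat \<times> nat \<times> bool) option \<Rightarrow> real" where
  "E d \<equiv> eig \<alpha> \<beta> \<sigma> d"

lemma beta_antimono:
  assumes "1 \<le> i" "i \<le> j" shows "\<beta> j \<le> \<beta> i"
  using assms(2)
proof (induction j rule: dec_induct)
  case (step n)
  then show ?case
    using beta_Suc_le[of n] assms(1) by simp
qed simp

lemma sigma_mono:
  assumes "1 \<le> i" "i \<le> j" shows "\<sigma> i \<le> \<sigma> j"
  using assms(2)
proof (induction j rule: dec_induct)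
  case (step n)
  then show ?case
    using sigma_le_Suc[of n] assms(1) by simp
qed simp

lemma beta_le_1: "j \<ge> 1 \<Longrightarrow> \<beta> j \<le> 1"
  using beta_antimono[of 1 j] beta_1_le_1 by simp

lemma eig_None: "E d None = (\<Sum>j=1..d. \<alpha> j)"
  by (simp add: eig_def)

lemma eig_Some: "1 \<le> j \<Longrightarrow> j \<le> d \<Longrightarrow> 1 \<le> k \<Longrightarrow> E d (Some (j, k, b)) = \<beta> j * real k powr - \<sigma> j"
  by (simp add: eig_def)

lemma eig_nonneg: "0 \<le> E d i"
  using alpha_nonneg beta_pos
  by (auto simp: eig_def less_imp_le intro!: sum_nonneg split: option.split)

lemma sum_eig_Some_powr_le:
  assumes "0 < \<tau>" "\<sigma> 1 * \<tau> > 1" "finite X"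
  shows "(\<Sum>x\<in>X. E d (Some x) powr \<tau>) \<le> 2 * zeta_real (\<sigma> 1 * \<tau>) * (\<Sum>j=1..d. \<beta> j powr \<tau>)"
proof -
  define K where "K = Max (insert 0 ((\<lambda>(j, k, b). k) ` X))"
  define box where "box = {1..d} \<times> {1..K} \<times> (UNIV :: bool set)"
  have "(\<Sum>x\<in>X. E d (Some x) powr \<tau>) \<le> (\<Sum>x\<in>X \<union> box. E d (Some x) powr \<tau>)"
    using \<open>finite X\<close> by (intro sum_mono2) (auto simp: box_def)
  also have "\<dots> = (\<Sum>x\<in>box. E d (Some x) powr \<tau>)"
  proof (rule sum.mono_neutral_right)
    show "\<forall>x\<in>X \<union> box - box. E d (Some x) powr \<tau> = 0"
    proof
      fix x assume x: "x \<in> X \<union> box - box"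
      obtain j k b where [simp]: "x = (j, k, b)"
        by (cases x) auto
      have "k \<le> K"
        unfolding K_def using \<open>finite X\<close> x by (intro Max_ge) force+
      with x show "E d (Some x) powr \<tau> = 0"
        by (auto simp: box_def eig_def)
    qed
  qed (use \<open>finite X\<close> in \<open>auto simp: box_def\<close>)
  also have "\<dots> = (\<Sum>j=1..d. \<Sum>k=1..K. \<Sum>b\<in>UNIV. E d (Some (j, k, b)) powr \<tau>)"
    unfolding box_def by (simp add: sum.cartesian_product)
  also have "\<dots> = (\<Sum>j=1..d. \<Sum>k=1..K. 2 * (\<beta> j powr \<tau> * real k powr - (\<sigma> j * \<tau>)))"
    using beta_pos by (intro sum.cong refl) (simp add: UNIV_bool eig_Some powr_mult powr_powr)
  also have "\<dots> \<le> (\<Sum>j=1..d. \<Sum>k=1..K. 2 * (\<beta> j powr \<tau> * real k powr - (\<sigma> 1 * \<tau>)))"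
    using sigma_mono[of 1] \<open>0 < \<tau>\<close>
    by (intro sum_mono mult_left_mono powr_mono) (auto intro: mult_right_mono)
  also have "\<dots> = 2 * ((\<Sum>j=1..d. \<beta> j powr \<tau>) * (\<Sum>k=1..K. real k powr - (\<sigma> 1 * \<tau>)))"
    unfolding sum_product by (simp add: sum_distrib_left)
  also have "\<dots> \<le> 2 * ((\<Sum>j=1..d. \<beta> j powr \<tau>) * zeta_real (\<sigma> 1 * \<tau>))"
    using assms by (intro mult_left_mono sum_le_zeta_real sum_nonneg) auto
  finally show ?thesis
    by (simp add: mult_ac)
qed

lemma sum_eig_powr_le:
  assumes "0 < \<tau>" "\<sigma> 1 * \<tau> > 1" "finite F"
  shows "(\<Sum>i\<in>F. E d i powr \<tau>)
    \<le> (\<Sum>j=1..d. \<alpha> j) powr \<tau> + 2 * zeta_real (\<sigma> 1 * \<tau>) * (\<Sum>j=1..d. \<beta> j powr \<tau>)"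
proof -
  define X where "X = Some -` F"
  have "finite X"
    unfolding X_def using \<open>finite F\<close> by (simp add: finite_vimageI)
  have "F \<subseteq> insert None (Some ` X)"
    unfolding X_def by (auto intro: option.exhaust)
  then have "(\<Sum>i\<in>F. E d i powr \<tau>) \<le> (\<Sum>i\<in>insert None (Some ` X). E d i powr \<tau>)"
    using \<open>finite X\<close> by (intro sum_mono2) auto
  also have "\<dots> = E d None powr \<tau> + (\<Sum>x\<in>X. E d (Some x) powr \<tau>)"
    using \<open>finite X\<close> by (simp add: sum.reindex)
  also have "\<dots> \<le> (\<Sum>j=1..d. \<alpha> j) powr \<tau> + 2 * zeta_real (\<sigma> 1 * \<tau>) * (\<Sum>j=1..d. \<beta> j powr \<tau>)"
    using sum_eig_Some_powr_le[OF assms(1,2) \<open>finite X\<close>] by (simp add: eig_None)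
  finally show ?thesis .
qed

lemma sum_eig_le: "finite F \<Longrightarrow> sum (E d) F \<le> (c + 2 * zeta_real (\<sigma> 1)) * (\<Sum>j=1..d. \<beta> j)"
proof -
  assume "finite F"
  have "sum (E d) F = (\<Sum>i\<in>F. E d i powr 1)"
    by (simp add: eig_nonneg)
  also have "\<dots> \<le> (\<Sum>j=1..d. \<alpha> j) powr 1 + 2 * zeta_real (\<sigma> 1 * 1) * (\<Sum>j=1..d. \<beta> j powr 1)"
    using sigma_1_gt_1 \<open>finite F\<close> by (intro sum_eig_powr_le) auto
  also have "\<dots> = (\<Sum>j=1..d. \<alpha> j) + 2 * zeta_real (\<sigma> 1) * (\<Sum>j=1..d. \<beta> j)"
    using alpha_nonneg beta_pos sum_nonneg[of "{1..d}" \<alpha>] by (simp add: less_imp_le)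
  also have "(\<Sum>j=1..d. \<alpha> j) \<le> c * (\<Sum>j=1..d. \<beta> j)"
    unfolding sum_distrib_left by (intro sum_mono alpha_le) auto
  finally show ?thesis
    by (simp add: algebra_simps)
qed

lemma eig_summable: "E d summable_on A"
proof -
  have "E d summable_on UNIV"
    using sum_eig_le by (intro nonneg_bdd_above_summable_on bdd_aboveI) (auto simp: eig_nonneg)
  then show ?thesis
    by (rule summable_on_subset) simp
qed

definition cov_trace :: "nat \<Rightarrow> real" where
  "cov_trace d = infsum (E d) UNIV"

lemma err2_0_eq_cov_trace: "err2 \<alpha> \<beta> \<sigma> d 0 = cov_trace d"
proof -
  have "{S. finite S \<and> card S \<le> 0} = {{}}"
    by auto
  then show ?thesis
    unfolding err2_def cov_trace_def by (subst \<open>_ = {{}}\<close>) simp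
qed

lemma cov_trace_ge_beta_1: "d \<ge> 1 \<Longrightarrow> \<beta> 1 \<le> cov_trace d"
  using finite_sum_le_infsum[OF eig_summable, of "{Some (1, 1, True)}" UNIV d]
  by (simp add: cov_trace_def eig_Some eig_nonneg)

lemma cov_trace_pos: "d \<ge> 1 \<Longrightarrow> 0 < cov_trace d"
  using cov_trace_ge_beta_1 beta_pos[of 1] by fastforce

lemma cov_trace_le: "cov_trace d \<le> (c + 2 * zeta_real (\<sigma> 1)) * (\<Sum>j=1..d. \<beta> j)"
  unfolding cov_trace_def by (rule infsum_le_finite_sums[OF eig_summable sum_eig_le])

lemma err2_le_infsum: "finite S \<Longrightarrow> card S \<le> n \<Longrightarrow> err2 \<alpha> \<beta> \<sigma> d n \<le> infsum (E d) (UNIV - S)"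
  unfolding err2_def
  by (rule cINF_lower) (auto intro!: bdd_belowI[of _ 0] infsum_nonneg simp: eig_nonneg)

lemma err2_geI:
  "(\<And>S. finite S \<Longrightarrow> card S \<le> n \<Longrightarrow> L \<le> infsum (E d) (UNIV - S)) \<Longrightarrow> L \<le> err2 \<alpha> \<beta> \<sigma> d n"
  unfolding err2_def by (rule cINF_greatest) (auto intro: exI[of _ "{}"])

lemma err_le_iff:
  assumes "\<epsilon> > 0"
  shows "err \<alpha> \<beta> \<sigma> d n \<le> \<epsilon> * err \<alpha> \<beta> \<sigma> d 0 \<longleftrightarrow> err2 \<alpha> \<beta> \<sigma> d n \<le> \<epsilon>\<^sup>2 * cov_trace d"
proof -
  have "\<epsilon> * err \<alpha> \<beta> \<sigma> d 0 = sqrt (\<epsilon>\<^sup>2 * cov_trace d)"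
    unfolding err_def err2_0_eq_cov_trace using assms by (simp add: real_sqrt_mult)
  then show ?thesis
    unfolding err_def by simp
qed

lemma err2_n_nor_le:
  assumes "d \<ge> 1" "\<epsilon> > 0"
  shows "err2 \<alpha> \<beta> \<sigma> d (n_nor \<alpha> \<beta> \<sigma> d \<epsilon>) \<le> \<epsilon>\<^sup>2 * cov_trace d"
proof -
  have "\<epsilon>\<^sup>2 * cov_trace d > 0"
    using cov_trace_pos assms by simp
  then obtain F where F: "finite F" "dist (sum (E d) F) (cov_trace d) \<le> \<epsilon>\<^sup>2 * cov_trace d"
    using infsum_finite_approximation[OF eig_summable] unfolding cov_trace_def by blast
  have "cov_trace d = infsum (E d) (F \<union> (UNIV - F))"
    by (simp add: cov_trace_def)
  also have "\<dots> = sum (E d) F + infsum (E d) (UNIV - F)"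
    using F(1) by (subst infsum_Un_disjoint) (auto simp: eig_summable)
  finally have "cov_trace d = sum (E d) F + infsum (E d) (UNIV - F)" .
  then have "infsum (E d) (UNIV - F) \<le> \<epsilon>\<^sup>2 * cov_trace d"
    using F(2) unfolding dist_real_def abs_le_iff by linarith
  then have "err2 \<alpha> \<beta> \<sigma> d (card F) \<le> \<epsilon>\<^sup>2 * cov_trace d"
    using err2_le_infsum[OF F(1) order.refl] by (rule order.trans[rotated])
  then have "err \<alpha> \<beta> \<sigma> d (card F) \<le> \<epsilon> * err \<alpha> \<beta> \<sigma> d 0"
    using err_le_iff[OF assms(2)] by simp
  then have "err \<alpha> \<beta> \<sigma> d (n_nor \<alpha> \<beta> \<sigma> d \<epsilon>) \<le> \<epsilon> * err \<alpha> \<beta> \<sigma> d 0"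
    unfolding n_nor_def by (rule LeastI)
  then show ?thesis
    using err_le_iff[OF assms(2)] by simp
qed

lemma n_nor_le: "\<epsilon> > 0 \<Longrightarrow> err2 \<alpha> \<beta> \<sigma> d n \<le> \<epsilon>\<^sup>2 * cov_trace d \<Longrightarrow> n_nor \<alpha> \<beta> \<sigma> d \<epsilon> \<le> n"
  unfolding n_nor_def by (rule Least_le) (simp add: err_le_iff)

lemma n_nor_ge_1:
  assumes "d \<ge> 1" "0 < \<epsilon>" "\<epsilon> < 1"
  shows "n_nor \<alpha> \<beta> \<sigma> d \<epsilon> \<ge> 1"
proof (rule ccontr)
  assume "\<not> n_nor \<alpha> \<beta> \<sigma> d \<epsilon> \<ge> 1"
  then have "n_nor \<alpha> \<beta> \<sigma> d \<epsilon> = 0"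
    by simp
  then have "cov_trace d \<le> \<epsilon>\<^sup>2 * cov_trace d"
    using err2_n_nor_le[OF assms(1,2)] by (simp add: err2_0_eq_cov_trace)
  moreover have "\<epsilon>\<^sup>2 < 1"
    using assms by (simp add: power_less_one_iff)
  ultimately show False
    using cov_trace_pos[OF assms(1)] by simp
qed

lemma err2_ge_card_mult:
  assumes "finite G" "\<And>x. x \<in> G \<Longrightarrow> m \<le> E d x" "0 \<le> m"
  shows "(real (card G) - real n) * m \<le> err2 \<alpha> \<beta> \<sigma> d n"
proof (rule err2_geI)
  fix S :: "(nat \<times> nat \<times> bool) option set" assume "finite S" "card S \<le> n"
  then have "(real (card G) - real n) * m \<le> (real (card G) - real (card S)) * m"
    using \<open>0 \<le> m\<close> by (intro mult_right_mono) auto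
  also have "\<dots> \<le> infsum (E d) (UNIV - S)"
    using assms \<open>finite S\<close> by (intro infsum_Diff_ge_card_mult eig_summable eig_nonneg)
  finally show "(real (card G) - real n) * m \<le> infsum (E d) (UNIV - S)" .
qed

lemma err2_ge_sum_beta: "(\<Sum>j=1..d. \<beta> j) - real n \<le> err2 \<alpha> \<beta> \<sigma> d n"
proof (rule err2_geI)
  fix S :: "(nat \<times> nat \<times> bool) option set" assume "finite S" "card S \<le> n"
  define G where "G = (\<lambda>j. Some (j, 1 :: nat, True)) ` {1..d}"
  have "(\<Sum>j=1..d. \<beta> j) = sum (E d) G"
    unfolding G_def by (subst sum.reindex) (auto simp: inj_on_def eig_Some)
  then have "(\<Sum>j=1..d. \<beta> j) - real (card S) \<le> infsum (E d) (UNIV - S)"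
    using \<open>finite S\<close> by (auto intro!: infsum_Diff_ge_sum_minus_card eig_summable eig_nonneg
        simp: G_def eig_Some beta_le_1)
  then show "(\<Sum>j=1..d. \<beta> j) - real n \<le> infsum (E d) (UNIV - S)"
    using \<open>card S \<le> n\<close> by linarith
qed

lemma err2_ge_beta:
  assumes "m \<ge> 1"
  shows "(real m - real n) * \<beta> m \<le> err2 \<alpha> \<beta> \<sigma> m n"
proof -
  have "(real (card ((\<lambda>j. Some (j, 1 :: nat, True)) ` {1..m})) - real n) * \<beta> m \<le> err2 \<alpha> \<beta> \<sigma> m n"
    using assms beta_pos[OF assms]
    by (intro err2_ge_card_mult) (auto simp: eig_Some beta_antimono)
  then show ?thesis
    by (simp add: card_image inj_on_def)
qed

(* At most n of the 2n eigenvalues \<beta> 1 k^(-\<sigma> 1), k \<le> 2n, can be removed. *)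
lemma err2_ge_powr:
  assumes "d \<ge> 1" "n \<ge> 1"
  shows "\<beta> 1 * 2 powr - \<sigma> 1 * real n powr (1 - \<sigma> 1) \<le> err2 \<alpha> \<beta> \<sigma> d n"
proof -
  define G where "G = (\<lambda>k. Some (1 :: nat, k, True)) ` {1..2 * n}"
  define m where "m = \<beta> 1 * real (2 * n) powr - \<sigma> 1"
  have "m \<le> E d x" if "x \<in> G" for x
  proof -
    obtain k where k: "x = Some (1, k, True)" "1 \<le> k" "k \<le> 2 * n"
      using \<open>x \<in> G\<close> by (auto simp: G_def)
    have "real (2 * n) powr - \<sigma> 1 \<le> real k powr - \<sigma> 1"
      using k sigma_1_gt_1 by (intro powr_mono2') auto
    then show ?thesis
      unfolding m_def k(1) using k assms beta_pos[of 1] by (simp add: eig_Some)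
  qed
  then have "(real (card G) - real n) * m \<le> err2 \<alpha> \<beta> \<sigma> d n"
    using beta_pos[of 1] by (intro err2_ge_card_mult) (auto simp: G_def m_def)
  moreover have "real (card G) = 2 * real n"
    by (simp add: G_def card_image inj_on_def)
  moreover have "real (2 * n) powr - \<sigma> 1 = 2 powr - \<sigma> 1 * real n powr - \<sigma> 1"
    by (simp add: powr_mult)
  moreover have "real n powr (1 - \<sigma> 1) = real n * real n powr - \<sigma> 1"
    using assms(2) by (simp add: powr_mult_base)
  ultimately show ?thesis
    by (simp add: m_def mult_ac)
qed

lemma spt_bound_imp_ge_sigma:
  assumes "spt_bound \<alpha> \<beta> \<sigma> p"
  shows "2 / (\<sigma> 1 - 1) \<le> p"
proof -
  obtain C where C: "C \<ge> 1"
    "\<And>d \<epsilon>. d \<ge> 1 \<Longrightarrow> 0 < \<epsilon> \<Longrightarrow> \<epsilon> < 1 \<Longrightarrow> real (n_nor \<alpha> \<beta> \<sigma> d \<epsilon>) \<le> C * \<epsilon> powr - p"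
    using spt_boundE[OF assms] by blast
  define a where "a = \<beta> 1 * 2 powr - \<sigma> 1 * C powr (1 - \<sigma> 1)"
  define K where "K = c + 2 * zeta_real (\<sigma> 1)"
  have "a > 0"
    unfolding a_def using beta_pos[of 1] C(1) by simp
  have "K > 0"
    unfolding K_def using c_pos zeta_real_ge_1[OF sigma_1_gt_1] by simp
  have "\<epsilon> powr (p * (\<sigma> 1 - 1)) \<le> K / a * \<epsilon> powr 2" if "0 < \<epsilon>" "\<epsilon> < 1" for \<epsilon>
  proof -
    define n where "n = n_nor \<alpha> \<beta> \<sigma> 1 \<epsilon>"
    have "n \<ge> 1"
      unfolding n_def using n_nor_ge_1 that by simp
    have "real n \<le> C * \<epsilon> powr - p"
      unfolding n_def using C(2) that by simp
    then have "(C * \<epsilon> powr - p) powr (1 - \<sigma> 1) \<le> real n powr (1 - \<sigma> 1)"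
      using \<open>n \<ge> 1\<close> sigma_1_gt_1 by (intro powr_mono2') auto
    moreover have "(C * \<epsilon> powr - p) powr (1 - \<sigma> 1) = C powr (1 - \<sigma> 1) * \<epsilon> powr (p * (\<sigma> 1 - 1))"
      using C(1) that by (simp add: powr_mult powr_powr algebra_simps)
    ultimately have "a * \<epsilon> powr (p * (\<sigma> 1 - 1)) \<le> \<beta> 1 * 2 powr - \<sigma> 1 * real n powr (1 - \<sigma> 1)"
      unfolding a_def using beta_pos[of 1] by (simp add: mult.assoc mult_left_mono)
    also have "\<dots> \<le> err2 \<alpha> \<beta> \<sigma> 1 n"
      using err2_ge_powr \<open>n \<ge> 1\<close> by simp
    also have "\<dots> \<le> \<epsilon>\<^sup>2 * cov_trace 1"
      unfolding n_def using err2_n_nor_le that by simp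
    also have "\<dots> \<le> \<epsilon>\<^sup>2 * K"
      using cov_trace_le[of 1] beta_1_le_1 \<open>K > 0\<close> unfolding K_def
      by (intro mult_left_mono) (auto intro: order_trans mult_left_le)
    finally show ?thesis
      using \<open>a > 0\<close> that by (simp add: field_simps powr_numeral)
  qed
  then have "2 \<le> p * (\<sigma> 1 - 1)"
    by (rule le_if_powr_le_const_mult_powr)
  then show ?thesis
    using sigma_1_gt_1 by (simp add: field_simps)
qed

(* For \<epsilon>^2 = 1/(2K) the admissible squared error is at most half of \<Sum>j \<beta> j, whereas
   discarding n eigenvalues removes at most n from the eigenvalues \<beta> j (k = 1), each \<le> 1. *)
lemma spt_bound_imp_sum_beta_bounded:
  assumes "spt_bound \<alpha> \<beta> \<sigma> p"
  obtains B where "\<And>d. (\<Sum>j=1..d. \<beta> j) \<le> B"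
proof -
  obtain C where C: "C \<ge> 1"
    "\<And>d \<epsilon>. d \<ge> 1 \<Longrightarrow> 0 < \<epsilon> \<Longrightarrow> \<epsilon> < 1 \<Longrightarrow> real (n_nor \<alpha> \<beta> \<sigma> d \<epsilon>) \<le> C * \<epsilon> powr - p"
    using spt_boundE[OF assms] by blast
  define K where "K = c + 2 * zeta_real (\<sigma> 1)"
  define \<epsilon> where "\<epsilon> = sqrt (1 / (2 * K))"
  have "K \<ge> 1"
    unfolding K_def using c_pos zeta_real_ge_1[OF sigma_1_gt_1] by simp
  then have \<epsilon>: "0 < \<epsilon>" "\<epsilon> < 1" "\<epsilon>\<^sup>2 * K = 1 / 2"
    unfolding \<epsilon>_def by auto
  show ?thesis
  proof (rule that)
    fix d :: nat
    show "(\<Sum>j=1..d. \<beta> j) \<le> 2 * C * \<epsilon> powr - p"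
    proof (cases "d \<ge> 1")
      case True
      define n where "n = n_nor \<alpha> \<beta> \<sigma> d \<epsilon>"
      have "(\<Sum>j=1..d. \<beta> j) - real n \<le> \<epsilon>\<^sup>2 * cov_trace d"
        unfolding n_def using err2_ge_sum_beta err2_n_nor_le[OF True \<epsilon>(1)] by (rule order.trans)
      also have "\<dots> \<le> \<epsilon>\<^sup>2 * (K * (\<Sum>j=1..d. \<beta> j))"
        unfolding K_def by (intro mult_left_mono cov_trace_le) auto
      finally have "(\<Sum>j=1..d. \<beta> j) \<le> 2 * real n"
        using \<epsilon>(3) by (simp add: mult.assoc[symmetric])
      also have "real n \<le> C * \<epsilon> powr - p"
        unfolding n_def using C(2) True \<epsilon> by simp
      finally show ?thesis
        by simp
    qed (use C(1) in \<open>simp\<close>)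
  qed
qed

lemma beta_le_if_n_nor_le_half:
  assumes "m \<ge> 1" "\<epsilon> > 0" "real (n_nor \<alpha> \<beta> \<sigma> m \<epsilon>) \<le> real m / 2"
  shows "\<beta> m \<le> 2 * \<epsilon>\<^sup>2 * cov_trace m / real m"
proof -
  have "real m / 2 * \<beta> m \<le> (real m - real (n_nor \<alpha> \<beta> \<sigma> m \<epsilon>)) * \<beta> m"
    using assms(3) beta_pos[OF assms(1)] by (intro mult_right_mono) auto
  also have "\<dots> \<le> err2 \<alpha> \<beta> \<sigma> m (n_nor \<alpha> \<beta> \<sigma> m \<epsilon>)"
    using err2_ge_beta[OF assms(1)] .
  also have "\<dots> \<le> \<epsilon>\<^sup>2 * cov_trace m"
    using err2_n_nor_le[OF assms(1,2)] .
  finally show ?thesis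
    using assms(1) by (simp add: field_simps)
qed

lemma spt_bound_imp_beta_le:
  assumes "spt_bound \<alpha> \<beta> \<sigma> p" "p > 0"
  obtains D where "D > 0" "eventually (\<lambda>m. 0 < \<beta> m \<and> \<beta> m \<le> D * real m powr - (1 + 2 / p)) sequentially"
proof -
  obtain C where C: "C \<ge> 1"
    "\<And>d \<epsilon>. d \<ge> 1 \<Longrightarrow> 0 < \<epsilon> \<Longrightarrow> \<epsilon> < 1 \<Longrightarrow> real (n_nor \<alpha> \<beta> \<sigma> d \<epsilon>) \<le> C * \<epsilon> powr - p"
    using spt_boundE[OF assms(1)] by blast
  obtain B where B: "\<And>d. (\<Sum>j=1..d. \<beta> j) \<le> B"
    using spt_bound_imp_sum_beta_bounded[OF assms(1)] by blast
  define T where "T = (c + 2 * zeta_real (\<sigma> 1)) * B"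
  have "0 \<le> c + 2 * zeta_real (\<sigma> 1)"
    using c_pos zeta_real_ge_1[OF sigma_1_gt_1] by simp
  then have trace_le_T: "cov_trace d \<le> T" for d
    unfolding T_def using cov_trace_le[of d] mult_left_mono[OF B[of d]] by (meson order_trans)
  have "T > 0"
    using trace_le_T[of 1] cov_trace_pos[of 1] by simp
  define D where "D = 2 * T * (2 * C) powr (2 / p)"
  have beta_le: "\<beta> m \<le> D * real m powr - (1 + 2 / p)" if m: "2 * C < real m" for m
  proof -
    have "m \<ge> 1" "real m > 0"
      using m C(1) by auto
    define \<epsilon> where "\<epsilon> = (2 * C / real m) powr (1 / p)"
    have \<epsilon>: "0 < \<epsilon>" "\<epsilon> < 1"
      unfolding \<epsilon>_def using m C(1) \<open>p > 0\<close> powr_less_mono2[of "1 / p" "2 * C / real m" 1] by auto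
    have "\<epsilon> powr - p = (2 * C / real m) powr - 1"
      unfolding \<epsilon>_def using \<open>p > 0\<close> by (simp add: powr_powr)
    then have "C * \<epsilon> powr - p = real m / 2"
      using C(1) \<open>real m > 0\<close> by (simp add: powr_minus_divide)
    then have n: "real (n_nor \<alpha> \<beta> \<sigma> m \<epsilon>) \<le> real m / 2"
      using C(2)[OF \<open>m \<ge> 1\<close> \<epsilon>] by simp
    have "\<epsilon>\<^sup>2 = (2 * C / real m) powr (2 / p)"
      unfolding \<epsilon>_def using \<epsilon>(1) by (simp add: powr_powr flip: powr_numeral)
    also have "\<dots> = (2 * C) powr (2 / p) * real m powr - (2 / p)"
      using C(1) \<open>real m > 0\<close> by (simp add: powr_divide powr_minus_divide)
    finally have \<epsilon>2: "\<epsilon>\<^sup>2 = (2 * C) powr (2 / p) * real m powr - (2 / p)" .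
    have "\<beta> m \<le> 2 * \<epsilon>\<^sup>2 * cov_trace m / real m"
      using beta_le_if_n_nor_le_half[OF \<open>m \<ge> 1\<close> \<epsilon>(1) n] .
    also have "\<dots> \<le> 2 * \<epsilon>\<^sup>2 * T / real m"
      using trace_le_T[of m] by (intro divide_right_mono mult_left_mono) auto
    also have "\<dots> = D * (real m powr - (2 / p) / real m)"
      unfolding \<epsilon>2 D_def by (simp add: field_simps)
    also have "real m powr - (2 / p) / real m = real m powr (- (2 / p) - 1)"
      using \<open>real m > 0\<close> by (simp add: powr_diff)
    also have "- (2 / p) - 1 = - (1 + 2 / p)"
      by simp
    finally show ?thesis .
  qed
  obtain N :: nat where "2 * C < real N"
    using reals_Archimedean2 by blast
  then have "eventually (\<lambda>m. 2 * C < real m) sequentially"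
    by (intro eventually_sequentiallyI[of N]) (meson of_nat_le_iff less_le_trans)
  then have "eventually (\<lambda>m. 0 < \<beta> m \<and> \<beta> m \<le> D * real m powr - (1 + 2 / p)) sequentially"
  proof eventually_elim
    case (elim m)
    then have "m \<ge> 1"
      using C(1) by (cases m) auto
    then show ?case
      using beta_pos beta_le elim by blast
  qed
  moreover have "D > 0"
    unfolding D_def using \<open>T > 0\<close> C(1) by simp
  ultimately show ?thesis
    using that by blast
qed

lemma spt_bound_imp_A_star_ge:
  assumes "spt_bound \<alpha> \<beta> \<sigma> p" "p > 0"
  shows "ereal (1 + 2 / p) \<le> A_star \<beta>"
  using spt_bound_imp_beta_le[OF assms] A_star_ge_if_eventually_le by metis

lemma sum_eig_powr_bounded:
  assumes "0 < \<tau>" "\<tau> \<le> 1" "\<sigma> 1 * \<tau> > 1" "summable (\<lambda>j. \<beta> j powr \<tau>)"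
  obtains M where "M > 0" "\<And>d F. finite F \<Longrightarrow> (\<Sum>i\<in>F. E d i powr \<tau>) \<le> M"
proof -
  define B where "B = (\<Sum>j. \<beta> j powr \<tau>)"
  have sum_le_B: "(\<Sum>j=1..d. \<beta> j powr \<tau>) \<le> B" for d
    unfolding B_def by (intro sum_le_suminf assms(4)) auto
  have alpha_le_powr: "\<alpha> j \<le> c * \<beta> j powr \<tau>" if "j \<ge> 1" for j
  proof -
    have "\<beta> j powr 1 \<le> \<beta> j powr \<tau>"
      using that assms(2) beta_pos beta_le_1 by (intro powr_mono') (auto simp: less_imp_le)
    then have "c * \<beta> j \<le> c * \<beta> j powr \<tau>"
      using beta_pos[OF that] c_pos by simp
    then show ?thesis
      using alpha_le[OF that] by linarith
  qed
  have sum_alpha_le: "(\<Sum>j=1..d. \<alpha> j) \<le> c * B" for d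
  proof -
    have "(\<Sum>j=1..d. \<alpha> j) \<le> c * (\<Sum>j=1..d. \<beta> j powr \<tau>)"
      unfolding sum_distrib_left using alpha_le_powr by (intro sum_mono) auto
    also have "\<dots> \<le> c * B"
      using sum_le_B[of d] c_pos by simp
    finally show ?thesis .
  qed
  define M where "M = (c * B) powr \<tau> + 2 * zeta_real (\<sigma> 1 * \<tau>) * B"
  show ?thesis
  proof (rule that)
    have "0 < \<beta> 1 powr \<tau>"
      using beta_pos[of 1] by simp
    also have "\<dots> \<le> B"
      using sum_le_B[of 1] by simp
    finally show "M > 0"
      unfolding M_def using zeta_real_ge_1[OF assms(3)] by (simp add: add_nonneg_pos)
  next
    fix d :: nat and F :: "(nat \<times> nat \<times> bool) option set" assume "finite F"
    have "(\<Sum>i\<in>F. E d i powr \<tau>)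
        \<le> (\<Sum>j=1..d. \<alpha> j) powr \<tau> + 2 * zeta_real (\<sigma> 1 * \<tau>) * (\<Sum>j=1..d. \<beta> j powr \<tau>)"
      using sum_eig_powr_le assms \<open>finite F\<close> by blast
    also have "\<dots> \<le> M"
      unfolding M_def using sum_alpha_le[of d] sum_le_B[of d] assms(1) zeta_real_ge_1[OF assms(3)]
        sum_nonneg[of "{1..d}" \<alpha>, OF alpha_nonneg]
      by (intro add_mono powr_mono2 mult_left_mono) auto
    finally show "(\<Sum>i\<in>F. E d i powr \<tau>) \<le> M" .
  qed
qed

lemma n_nor_le_if_sum_eig_powr_le:
  assumes "d \<ge> 1" "0 < \<tau>" "\<tau> < 1" "\<And>F. finite F \<Longrightarrow> (\<Sum>i\<in>F. E d i powr \<tau>) \<le> M"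
    and "0 < \<epsilon>" "0 < t" "t powr (1 - \<tau>) * M \<le> \<epsilon>\<^sup>2 * \<beta> 1"
  shows "real (n_nor \<alpha> \<beta> \<sigma> d \<epsilon>) \<le> M / t powr \<tau>"
proof -
  define S where "S = {i. t < E d i}"
  have "finite S" "real (card S) \<le> M / t powr \<tau>"
    unfolding S_def using assms(2,4,6) by (blast intro: finite_superlevel_set card_superlevel_set_le)+
  have "infsum (E d) (UNIV - S) \<le> t powr (1 - \<tau>) * M"
    unfolding S_def using assms(2,3,4)
    by (intro infsum_le_powr_mult_if_le eig_summable) (auto simp: eig_nonneg)
  also have "\<dots> \<le> \<epsilon>\<^sup>2 * cov_trace d"
    using assms(7) mult_left_mono[OF cov_trace_ge_beta_1[OF assms(1)] zero_le_power2[of \<epsilon>]]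
    by (rule order.trans)
  finally have "err2 \<alpha> \<beta> \<sigma> d (card S) \<le> \<epsilon>\<^sup>2 * cov_trace d"
    using err2_le_infsum[OF \<open>finite S\<close> order.refl, of d] by linarith
  then have "n_nor \<alpha> \<beta> \<sigma> d \<epsilon> \<le> card S"
    by (rule n_nor_le[OF assms(5)])
  then show ?thesis
    using \<open>real (card S) \<le> M / t powr \<tau>\<close> by linarith
qed

lemma spt_bound_if:
  assumes "p > 0" "2 / (\<sigma> 1 - 1) < p" "ereal (1 + 2 / p) < A_star \<beta>"
  shows "spt_bound \<alpha> \<beta> \<sigma> p"
proof -
  define \<tau> where "\<tau> = p / (p + 2)"
  have \<tau>: "0 < \<tau>" "\<tau> < 1" "1 / \<tau> = 1 + 2 / p"
    unfolding \<tau>_def using \<open>p > 0\<close> by (auto simp: field_simps)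
  have "2 < p * (\<sigma> 1 - 1)"
    using assms(2) sigma_1_gt_1 by (simp add: divide_less_eq mult.commute)
  then have "\<sigma> 1 * \<tau> > 1"
    unfolding \<tau>_def using \<open>p > 0\<close> by (simp add: field_simps)
  moreover have "summable (\<lambda>j. \<beta> j powr \<tau>)"
    using \<tau> assms(3) beta_pos by (intro summable_powr_if_A_star_gt) auto
  ultimately obtain M where M: "M > 0" "\<And>d F. finite F \<Longrightarrow> (\<Sum>i\<in>F. E d i powr \<tau>) \<le> M"
    using sum_eig_powr_bounded[OF \<tau>(1) less_imp_le[OF \<tau>(2)]] by blast
  define C where "C = M / (\<beta> 1 / M) powr (p / 2)"
  show ?thesis
    unfolding spt_bound_def
  proof (intro conjI exI[of _ C] allI impI)
    show "p \<ge> 0" "C \<ge> 0"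
      using \<open>p > 0\<close> \<open>M > 0\<close> by (auto simp: C_def)
    fix d :: nat and \<epsilon> :: real assume "d \<ge> 1" and \<epsilon>: "0 < \<epsilon> \<and> \<epsilon> < 1"
    define y where "y = \<epsilon>\<^sup>2 * \<beta> 1 / M"
    define t where "t = y powr ((p + 2) / 2)"
    have "y > 0"
      unfolding y_def using \<epsilon> beta_pos[of 1] \<open>M > 0\<close> by simp
    then have "t > 0"
      unfolding t_def by simp
    have "(p + 2) / 2 * (1 - \<tau>) = 1" "(p + 2) / 2 * \<tau> = p / 2"
      unfolding \<tau>_def using \<open>p > 0\<close> by (simp_all add: field_simps)
    then have "t powr (1 - \<tau>) = y" "t powr \<tau> = y powr (p / 2)"
      unfolding t_def using \<open>y > 0\<close> by (simp_all add: powr_powr)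
    have "y = \<epsilon> powr 2 * (\<beta> 1 / M)"
      unfolding y_def using \<epsilon> by (simp add: powr_numeral)
    then have "t powr \<tau> = (\<epsilon> powr 2) powr (p / 2) * (\<beta> 1 / M) powr (p / 2)"
      unfolding \<open>t powr \<tau> = y powr (p / 2)\<close> by (simp only: powr_mult)
    also have "(\<epsilon> powr 2) powr (p / 2) = \<epsilon> powr p"
      by (simp only: powr_powr) simp
    finally have "t powr \<tau> = \<epsilon> powr p * (\<beta> 1 / M) powr (p / 2)" .
    then have "M / t powr \<tau> = C * \<epsilon> powr - p"
      unfolding C_def using \<epsilon> by (simp add: powr_minus_divide)
    moreover have "t powr (1 - \<tau>) * M \<le> \<epsilon>\<^sup>2 * \<beta> 1"
      using \<open>t powr (1 - \<tau>) = y\<close> \<open>M > 0\<close> by (simp add: y_def)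
    moreover have "0 < \<epsilon>"
      using \<epsilon> by simp
    ultimately show "real (n_nor \<alpha> \<beta> \<sigma> d \<epsilon>) \<le> C * \<epsilon> powr - p"
      using n_nor_le_if_sum_eig_powr_le[OF \<open>d \<ge> 1\<close> \<tau>(1,2) M(2) _ \<open>t > 0\<close>] by simp
  qed
qed

end

theorem theorem2p2:
  fixes \<alpha> \<beta> \<sigma> :: "nat \<Rightarrow> real" and c :: real
  assumes "\<And>j. j \<ge> 1 \<Longrightarrow> \<alpha> j \<ge> 0"
    and "\<beta> 1 \<le> 1"
    and "\<And>j. j \<ge> 1 \<Longrightarrow> \<beta> (Suc j) \<le> \<beta> j"
    and "\<And>j. j \<ge> 1 \<Longrightarrow> \<beta> j > 0"
    and "\<sigma> 1 > 1"
    and "\<And>j. j \<ge> 1 \<Longrightarrow> \<sigma> j \<le> \<sigma> (Suc j)"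
    and "c > 0"
    and "\<And>j. j \<ge> 1 \<Longrightarrow> \<alpha> j \<le> c * \<beta> j"
  shows "(SPT_NOR \<alpha> \<beta> \<sigma> \<longleftrightarrow> A_star \<beta> > 1)
    \<and> (A_star \<beta> > 1 \<longrightarrow>
         p_str_avg \<alpha> \<beta> \<sigma> =
           max (if A_star \<beta> = \<infinity> then 0 else 2 / (real_of_ereal (A_star \<beta>) - 1))
               (2 / (\<sigma> 1 - 1)))"
proof -
  interpret additive_korobov \<alpha> \<beta> \<sigma> c
    using assms by unfold_locales
  let ?q = "spt_exponent (A_star \<beta>) (\<sigma> 1)"
  have necessary: "1 < A_star \<beta> \<and> ?q \<le> p" if "spt_bound \<alpha> \<beta> \<sigma> p" for p
  proof -
    have "0 < 2 / (\<sigma> 1 - 1)"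
      using sigma_1_gt_1 by simp
    then have "p > 0"
      using spt_bound_imp_ge_sigma[OF that] by linarith
    then have "1 < ereal (1 + 2 / p)" "ereal (1 + 2 / p) \<le> A_star \<beta>"
      using spt_bound_imp_A_star_ge[OF that] by auto
    then show ?thesis
      using spt_exponent_le \<open>p > 0\<close> spt_bound_imp_ge_sigma[OF that] by (blast intro: less_le_trans)
  qed
  have sufficient: "spt_bound \<alpha> \<beta> \<sigma> p" if "1 < A_star \<beta>" "?q < p" for p
    using less_spt_exponentD[OF that(1) sigma_1_gt_1 that(2)] by (intro spt_bound_if)
  have "SPT_NOR \<alpha> \<beta> \<sigma> \<longleftrightarrow> 1 < A_star \<beta>"
    unfolding SPT_NOR_def using necessary sufficient[of "?q + 1"] by auto
  moreover have "p_str_avg \<alpha> \<beta> \<sigma> = ?q" if "1 < A_star \<beta>"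
    unfolding p_str_avg_def using necessary sufficient[OF that] by (intro cInf_eq_if_threshold) auto
  ultimately show ?thesis
    unfolding spt_exponent_def by simp
qed

end
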